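(* Let $\varepsilon>0$, $\Omega\subset\mathbb{R}^2$ bounded open, $u\in\mathcal{SF}_\varepsilon(\Omega)$, $R\in\mathcal{R}_\varepsilon(u)$, and let $S_R(u)\subseteq\mathbb{S}^2$ be an admissible interpolation surface for $u$ in $R$. Then there exists $u_R\in\mathbb{S}^2$ such that $u_R\in S_R(u)$ and $u_R\cdot z\ge0$ for every $z\in S_R(u)$.
   Context: $\mathcal{L}=\{ae_1+b\hat e_2:a,b\in\mathbb{Z}\}$ with $e_1=(1,0)$, $\hat e_2=\frac12(1,\sqrt3)$, $\mathcal{L}_\varepsilon=\varepsilon\mathcal{L}$, $\mathcal{L}_\varepsilon(R)=\mathcal{L}_\varepsilon\cap R$; $\mathcal{T}_\varepsilon$ is the set of closed triangles with vertices in $\mathcal{L}_\varepsilon$ pairwise at distance $\varepsilon$; $\mathcal{E}_\varepsilon$ the set of segments $[i,j]$, $i,j\in\mathcal{L}_\varepsilon$, $|i-j|=\varepsilon$. $n=(0,0,1)$; $\mathcal{SF}_\varepsilon(\Omega)$ is the set of $u:\mathcal{L}_\varepsilon\to\mathbb{S}^2$ with $u=n$ on $\mathcal{L}_\varepsilon\setminus\Omega$. $\mathcal{N}_\varepsilon(u)=\{[i,j]\in\mathcal{E}_\varepsilon:u(i)=-u(j)\}$. Two triangles of $\mathcal{T}_\varepsilon$ are neighbours if their intersection is an edge in $\mathcal{N}_\varepsilon(u)$, connected if joined by a finite chain of neighbours; $\mathcal{R}_\varepsilon(u)$ is the set of unions of pairwise connected triangles maximal under inclusion. $\mathrm{cone}_R(u)=\{\sum_{w\in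 u(\mathcal{L}_\varepsilon(R))}\lambda_ww:\lambda_w\ge0\}$. $S_R(u)$ is an admissible interpolation surface for $u$ in $R$ if: when $\mathrm{cone}_R(u)$ is not a linear subspace of $\mathbb{R}^3$, $S_R(u)=\{v/|v|:v=\sum_w\lambda_ww,\ \lambda_w\ge0,\ \sum_w\lambda_w>0\}$; when it is a linear subspace, $S_R(u)=\{v/|v|:v=\sum_w\lambda_ww+\tau h,\ \lambda_w,\tau\ge0,\ \sum_w\lambda_w+\tau>0\}$ for some $h\in\mathbb{S}^2$ orthogonal to $\mathrm{cone}_R(u)$ (sums over $w\in u(\mathcal{L}_\varepsilon(R))$). *)

theory Defs
  imports "HOL-Analysis.Analysis"
begin

definition e1 :: "real^2" where "e1 = vector [1, 0]"
definition e2hat :: "real^2" where "e2hat = vector [1/2, sqrt 3 / 2]"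
definition nvec :: "real^3" where "nvec = vector [0, 0, 1]"

definition Leps :: "real \<Rightarrow> (real^2) set" where
  "Leps \<epsilon> = {\<epsilon> *\<^sub>R (of_int a *\<^sub>R e1 + of_int b *\<^sub>R e2hat) | a b :: int. True}"

definition Leps_in :: "real \<Rightarrow> (real^2) set \<Rightarrow> (real^2) set" where
  "Leps_in \<epsilon> R = Leps \<epsilon> \<inter> R"

definition Teps :: "real \<Rightarrow> (real^2) set set" where
  "Teps \<epsilon> = {convex hull {i, j, k} | i j k. i \<in> Leps \<epsilon> \<and> j \<in> Leps \<epsilon> \<and> k \<in> Leps \<epsilon>
      \<and> dist i j = \<epsilon> \<and> dist j k = \<epsilon> \<and> dist i k = \<epsilon>}"

definition Eeps :: "real \<Rightarrow> (real^2) set set" where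
  "Eeps \<epsilon> = {closed_segment i j | i j. i \<in> Leps \<epsilon> \<and> j \<in> Leps \<epsilon> \<and> dist i j = \<epsilon>}"

definition SF :: "real \<Rightarrow> (real^2) set \<Rightarrow> ((real^2) \<Rightarrow> real^3) set" where
  "SF \<epsilon> \<Omega> = {u. (\<forall>i\<in>Leps \<epsilon>. u i \<in> sphere 0 1) \<and> (\<forall>i\<in>Leps \<epsilon> - \<Omega>. u i = nvec)}"

definition Neps :: "real \<Rightarrow> ((real^2) \<Rightarrow> real^3) \<Rightarrow> (real^2) set set" where
  "Neps \<epsilon> u = {closed_segment i j | i j. i \<in> Leps \<epsilon> \<and> j \<in> Leps \<epsilon> \<and> dist i j = \<epsilon>
      \<and> u i = - u j}"

definition neighbours :: "real \<Rightarrow> ((real^2) \<Rightarrow> real^3) \<Rightarrow> (real^2) set \<Rightarrow> (real^2) set \<Rightarrow> bool" where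
  "neighbours \<epsilon> u T1 T2 \<longleftrightarrow> T1 \<in> Teps \<epsilon> \<and> T2 \<in> Teps \<epsilon> \<and> T1 \<inter> T2 \<in> Neps \<epsilon> u"

definition tri_connected :: "real \<Rightarrow> ((real^2) \<Rightarrow> real^3) \<Rightarrow> (real^2) set \<Rightarrow> (real^2) set \<Rightarrow> bool" where
  "tri_connected \<epsilon> u T1 T2 \<longleftrightarrow> (neighbours \<epsilon> u)\<^sup>*\<^sup>* T1 T2"

definition conn_unions :: "real \<Rightarrow> ((real^2) \<Rightarrow> real^3) \<Rightarrow> (real^2) set set" where
  "conn_unions \<epsilon> u = {\<Union>C | C. C \<subseteq> Teps \<epsilon> \<and> (\<forall>T1\<in>C. \<forall>T2\<in>C. tri_connected \<epsilon> u T1 T2)}"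

definition Regions :: "real \<Rightarrow> ((real^2) \<Rightarrow> real^3) \<Rightarrow> (real^2) set set" where
  "Regions \<epsilon> u = {R \<in> conn_unions \<epsilon> u. \<forall>R'\<in>conn_unions \<epsilon> u. R \<subseteq> R' \<longrightarrow> R' = R}"

definition vals :: "real \<Rightarrow> ((real^2) \<Rightarrow> real^3) \<Rightarrow> (real^2) set \<Rightarrow> (real^3) set" where
  "vals \<epsilon> u R = u ` Leps_in \<epsilon> R"

definition cone_R :: "real \<Rightarrow> ((real^2) \<Rightarrow> real^3) \<Rightarrow> (real^2) set \<Rightarrow> (real^3) set" where
  "cone_R \<epsilon> u R = {(\<Sum>w\<in>F. l w *\<^sub>R w) | F l. F \<subseteq> vals \<epsilon> u R \<and> finite F \<and> (\<forall>w\<in>F. l w \<ge> 0)}"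

definition admissible_surface ::
  "real \<Rightarrow> ((real^2) \<Rightarrow> real^3) \<Rightarrow> (real^2) set \<Rightarrow> (real^3) set \<Rightarrow> bool" where
  "admissible_surface \<epsilon> u R S \<longleftrightarrow>
    (\<not> subspace (cone_R \<epsilon> u R) \<longrightarrow>
       S = {v /\<^sub>R norm v | v. \<exists>F l. F \<subseteq> vals \<epsilon> u R \<and> finite F \<and> (\<forall>w\<in>F. l w \<ge> 0)
              \<and> (\<Sum>w\<in>F. l w) > 0 \<and> v = (\<Sum>w\<in>F. l w *\<^sub>R w) \<and> v \<noteq> 0}) \<and>
    (subspace (cone_R \<epsilon> u R) \<longrightarrow>
       (\<exists>h. norm h = 1 \<and> (\<forall>c\<in>cone_R \<epsilon> u R. inner h c = 0) \<and>
          S = {v /\<^sub>R norm v | v. \<exists>F l \<tau>. F \<subseteq> vals \<epsilon> u R \<and> finite F \<and> (\<forall>w\<in>F. l w \<ge> 0)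
              \<and> \<tau> \<ge> 0 \<and> (\<Sum>w\<in>F. l w) + \<tau> > 0 \<and> v = (\<Sum>w\<in>F. l w *\<^sub>R w) + \<tau> *\<^sub>R h \<and> v \<noteq> 0}))"

end

(*
  If cone_R(u) is a subspace, the unit normal h used to build S_R(u) lies in S_R(u) and
  is orthogonal to the cone, so h \<bullet> z \<ge> 0 on S_R(u).  Otherwise cone_R(u) is a convex
  cone that is not a subspace, and it is closed because only finitely many spins occur
  in it: R is bounded, since a triangle of R with a neighbour touches \<Omega> (the endpoints
  of a frustrated edge cannot both carry the value n).  Such a cone K meets its dual
  cone outside 0: separating some -k \<notin> K (with k \<in> K) from K gives a functional a \<ge> 0
  on K with a \<bullet> k > 0, and the projection q of a onto K satisfies q \<bullet> y \<ge> a \<bullet> y \<ge> 0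
  on K and q \<noteq> 0.  The direction q / |q| then lies in S_R(u) and has nonnegative inner
  product with all of it.
*)
theory Submission
  imports Defs
begin

lemma convex_cone_sum:
  assumes "convex_cone K" "\<And>x. x \<in> A \<Longrightarrow> f x \<in> K"
  shows "sum f A \<in> K"
  using assms(2)
proof (induction A rule: infinite_finite_induct)
  case (insert x A)
  then show ?case by (simp add: assms(1) convex_cone_add)
qed (simp_all add: assms(1) convex_cone_contains_0)

lemma convex_cone_hull_eq_nonneg_combinations:
  "convex_cone hull V = {\<Sum>w\<in>F. l w *\<^sub>R w | F l. F \<subseteq> V \<and> finite F \<and> (\<forall>w\<in>F. 0 \<le> l w)}"
  (is "_ = ?C")
proof (rule hull_unique)
  show "V \<subseteq> ?C"
  proof
    fix v assume "v \<in> V"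
    then show "v \<in> ?C" by (intro CollectI exI[of _ "{v}"] exI[of _ "\<lambda>_. 1"]) auto
  qed
  show "convex_cone ?C"
    unfolding convex_cone_iff
  proof (intro conjI ballI allI impI)
    show "0 \<in> ?C" by (intro CollectI exI[of _ "{}"]) auto
  next
    fix x y assume "x \<in> ?C" "y \<in> ?C"
    then obtain F l G m where F: "F \<subseteq> V" "finite F" "\<forall>w\<in>F. 0 \<le> l w" "x = (\<Sum>w\<in>F. l w *\<^sub>R w)"
      and G: "G \<subseteq> V" "finite G" "\<forall>w\<in>G. 0 \<le> m w" "y = (\<Sum>w\<in>G. m w *\<^sub>R w)"
      by blast
    define n where "n w = (if w \<in> F then l w else 0) + (if w \<in> G then m w else 0)" for w
    have "x = (\<Sum>w\<in>F \<union> G. (if w \<in> F then l w else 0) *\<^sub>R w)"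
      "y = (\<Sum>w\<in>F \<union> G. (if w \<in> G then m w else 0) *\<^sub>R w)"
      using F G by (auto intro!: sum.mono_neutral_cong_left)
    then have "x + y = (\<Sum>w\<in>F \<union> G. n w *\<^sub>R w)"
      by (simp add: n_def scaleR_add_left sum.distrib)
    moreover have "\<forall>w\<in>F \<union> G. 0 \<le> n w" using F G by (auto simp: n_def)
    ultimately show "x + y \<in> ?C" using F G by blast
  next
    fix x and c :: real assume "x \<in> ?C" "0 \<le> c"
    then obtain F l where F: "F \<subseteq> V" "finite F" "\<forall>w\<in>F. 0 \<le> l w" "x = (\<Sum>w\<in>F. l w *\<^sub>R w)"
      by blast
    then have "c *\<^sub>R x = (\<Sum>w\<in>F. (c * l w) *\<^sub>R w)" by (simp add: scaleR_sum_right)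
    then show "c *\<^sub>R x \<in> ?C" using F \<open>0 \<le> c\<close> by (intro CollectI exI[of _ F] exI[of _ "\<lambda>w. c * l w"]) auto
  qed
  show "?C \<subseteq> K" if "V \<subseteq> K" "convex_cone K" for K
    using that by (auto intro!: convex_cone_sum convex_cone_scaleR)
qed

lemma convex_cone_separating_functional:
  fixes K :: "'a::euclidean_space set"
  assumes K: "convex_cone K" "closed K" and k: "k \<in> K" "- k \<notin> K"
  shows "\<exists>a. (\<forall>x\<in>K. 0 \<le> a \<bullet> x) \<and> 0 < a \<bullet> k"
proof -
  have "convex K" using K(1) by (simp add: convex_cone_def)
  then obtain a b where ab: "a \<bullet> (- k) < b" "\<forall>x\<in>K. b < a \<bullet> x"
    using separating_hyperplane_closed_point K(2) k(2) by blast
  have "b < 0" using ab(2) convex_cone_contains_0[OF K(1)] by force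
  have "0 \<le> a \<bullet> x" if "x \<in> K" for x
  proof (rule ccontr)
    assume neg: "\<not> 0 \<le> a \<bullet> x"
    define t where "t = b / (a \<bullet> x)"
    have "0 \<le> t" using neg \<open>b < 0\<close> by (simp add: t_def divide_nonpos_neg)
    then have "b < a \<bullet> (t *\<^sub>R x)" using ab(2) convex_cone_scaleR[OF K(1) _ that] by blast
    also have "a \<bullet> (t *\<^sub>R x) = b" using neg by (simp add: t_def)
    finally show False by simp
  qed
  moreover have "0 < a \<bullet> k" using ab(1) \<open>b < 0\<close> by simp
  ultimately show ?thesis by blast
qed

lemma closest_point_convex_cone_dot_le:
  assumes K: "convex_cone K" "closed K" and y: "y \<in> K"
  shows "(a - closest_point K a) \<bullet> y \<le> 0"
proof -
  let ?q = "closest_point K a"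
  have "?q \<in> K" using K y by (auto intro: closest_point_in_set)
  then have "?q + y \<in> K" using K(1) y by (simp add: convex_cone_add)
  then show ?thesis
    using closest_point_dot[OF _ K(2), of "?q + y" a] K(1) by (simp add: convex_cone_def)
qed

lemma closed_convex_cone_meets_dual_cone:
  fixes K :: "'a::euclidean_space set"
  assumes K: "convex_cone K" "closed K" "\<not> subspace K"
  shows "\<exists>q\<in>K. q \<noteq> 0 \<and> (\<forall>y\<in>K. 0 \<le> q \<bullet> y)"
proof -
  obtain k where k: "k \<in> K" "- k \<notin> K"
    using K subspace_convex_cone_symmetric by blast
  then obtain a where a: "\<forall>x\<in>K. 0 \<le> a \<bullet> x" "0 < a \<bullet> k"
    using convex_cone_separating_functional K(1,2) by blast
  define q where "q = closest_point K a"
  have "q \<in> K" using K k by (auto simp: q_def intro: closest_point_in_set)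
  moreover have "0 \<le> q \<bullet> y" if "y \<in> K" for y
  proof -
    have "(a - q) \<bullet> y \<le> 0"
      unfolding q_def using K(1,2) that by (rule closest_point_convex_cone_dot_le)
    then show ?thesis using a(1) that by (simp add: inner_diff_left) (meson order_trans)
  qed
  moreover have "q \<noteq> 0"
    using closest_point_convex_cone_dot_le[OF K(1,2) k(1), of a] a(2) by (auto simp: q_def)
  ultimately show ?thesis by blast
qed

lemma Leps_components:
  "(\<epsilon> *\<^sub>R (of_int a *\<^sub>R e1 + of_int b *\<^sub>R e2hat)) $ 1 = \<epsilon> * (a + b / 2)"
  "(\<epsilon> *\<^sub>R (of_int a *\<^sub>R e1 + of_int b *\<^sub>R e2hat)) $ 2 = \<epsilon> * b * (sqrt 3 / 2)"
  by (simp_all add: e1_def e2hat_def algebra_simps)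

lemma Leps_coefficients_bound:
  assumes "\<epsilon> > 0" and p: "norm (\<epsilon> *\<^sub>R (of_int a *\<^sub>R e1 + of_int b *\<^sub>R e2hat)) \<le> M"
  shows "\<epsilon> * \<bar>of_int a\<bar> \<le> 2 * M" "\<epsilon> * \<bar>of_int b\<bar> \<le> 2 * M"
proof -
  have coord1: "\<epsilon> * \<bar>a + b / 2\<bar> \<le> M"
    using order_trans[OF component_le_norm_cart p, of 1] assms(1)
    unfolding Leps_components by (simp add: abs_mult)
  have "\<epsilon> * \<bar>b\<bar> * (sqrt 3 / 2) \<le> M"
    using order_trans[OF component_le_norm_cart p, of 2] assms(1)
    unfolding Leps_components by (simp add: abs_mult)
  moreover have "\<epsilon> * \<bar>b\<bar> * 1 \<le> \<epsilon> * \<bar>b\<bar> * sqrt 3"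
    using assms(1) by (intro mult_left_mono) auto
  ultimately show b: "\<epsilon> * \<bar>of_int b\<bar> \<le> 2 * M" by simp
  have "\<bar>real_of_int a\<bar> \<le> \<bar>a + b / 2\<bar> + \<bar>b\<bar> / 2"
    using abs_triangle_ineq4[of "a + b / 2" "b / 2"] by simp
  then have "\<epsilon> * \<bar>of_int a\<bar> \<le> \<epsilon> * (\<bar>a + b / 2\<bar> + \<bar>b\<bar> / 2)"
    using assms(1) by (intro mult_left_mono) auto
  also have "\<dots> \<le> 2 * M" using coord1 b by (simp add: algebra_simps)
  finally show "\<epsilon> * \<bar>of_int a\<bar> \<le> 2 * M" .
qed

lemma finite_Leps_Int_bounded:
  assumes "\<epsilon> > 0" "bounded B"
  shows "finite (Leps \<epsilon> \<inter> B)"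
proof -
  obtain M where M: "\<forall>x\<in>B. norm x \<le> M" using assms(2) bounded_iff by blast
  define N where "N = \<lceil>2 * M / \<epsilon>\<rceil>"
  define f where "f = (\<lambda>(a::int, b::int). \<epsilon> *\<^sub>R (of_int a *\<^sub>R e1 + of_int b *\<^sub>R e2hat))"
  have "Leps \<epsilon> \<inter> B \<subseteq> f ` ({-N..N} \<times> {-N..N})"
  proof
    fix p assume p: "p \<in> Leps \<epsilon> \<inter> B"
    then obtain a b :: int where pab: "p = \<epsilon> *\<^sub>R (of_int a *\<^sub>R e1 + of_int b *\<^sub>R e2hat)"
      unfolding Leps_def by blast
    then have "\<epsilon> * \<bar>of_int a\<bar> \<le> 2 * M" "\<epsilon> * \<bar>of_int b\<bar> \<le> 2 * M"
      using Leps_coefficients_bound assms(1) M p by blast+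
    then have "of_int \<bar>a\<bar> \<le> 2 * M / \<epsilon>" "of_int \<bar>b\<bar> \<le> 2 * M / \<epsilon>"
      using assms(1) by (simp_all add: pos_le_divide_eq mult.commute)
    then have "\<bar>a\<bar> \<le> N" "\<bar>b\<bar> \<le> N"
      unfolding N_def by (meson le_of_int_ceiling of_int_le_iff order_trans)+
    then show "p \<in> f ` ({-N..N} \<times> {-N..N})"
      unfolding f_def pab by (auto intro!: image_eqI[of _ _ "(a, b)"])
  qed
  then show ?thesis by (rule finite_subset) auto
qed

lemma Teps_subset_cball:
  assumes "T \<in> Teps \<epsilon>" "x \<in> T"
  shows "T \<subseteq> cball x (2 * \<epsilon>)"
proof -
  obtain i j k where T: "T = convex hull {i, j, k}"
    and d: "dist i j = \<epsilon>" "dist j k = \<epsilon>" "dist i k = \<epsilon>"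
    using assms(1) unfolding Teps_def by blast
  have "{i, j, k} \<subseteq> cball i \<epsilon>" using d by auto
  then have Ti: "T \<subseteq> cball i \<epsilon>" unfolding T by (rule hull_minimal) (rule convex_cball)
  show ?thesis
  proof
    fix y assume "y \<in> T"
    then have "dist i y \<le> \<epsilon>" "dist i x \<le> \<epsilon>" using Ti assms(2) by auto
    then show "y \<in> cball x (2 * \<epsilon>)" using dist_triangle[of x y i] by (simp add: dist_commute)
  qed
qed

lemma Teps_bounded: "T \<in> Teps \<epsilon> \<Longrightarrow> bounded T"
  unfolding Teps_def by (auto intro: finite_imp_bounded_convex_hull)

lemma Neps_meets_domain:
  assumes "u \<in> SF \<epsilon> \<Omega>" "E \<in> Neps \<epsilon> u"
  shows "E \<inter> \<Omega> \<noteq> {}"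
proof -
  obtain i j where E: "E = closed_segment i j" "i \<in> Leps \<epsilon>" "j \<in> Leps \<epsilon>" "u i = - u j"
    using assms(2) unfolding Neps_def by blast
  have "nvec \<noteq> - nvec" by (simp add: nvec_def vec_eq_iff forall_3)
  moreover have "u i = nvec \<and> u j = nvec" if "i \<notin> \<Omega>" "j \<notin> \<Omega>"
    using assms(1) E(2,3) that unfolding SF_def by auto
  ultimately have "i \<in> \<Omega> \<or> j \<in> \<Omega>" using E(4) by force
  then show ?thesis using E(1) by auto
qed

lemma conn_unions_bounded:
  assumes u: "u \<in> SF \<epsilon> \<Omega>" and "bounded \<Omega>" and R: "R \<in> conn_unions \<epsilon> u"
  shows "bounded R"
proof -
  obtain C where C: "R = \<Union>C" "C \<subseteq> Teps \<epsilon>"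
    and conn: "\<forall>T1\<in>C. \<forall>T2\<in>C. (neighbours \<epsilon> u)\<^sup>*\<^sup>* T1 T2"
    using R unfolding conn_unions_def tri_connected_def by blast
  obtain M where M: "\<forall>x\<in>\<Omega>. norm x \<le> M" using \<open>bounded \<Omega>\<close> bounded_iff by blast
  consider (isolated) T where "T \<in> C" "\<nexists>T'. neighbours \<epsilon> u T T'"
    | (linked) "\<forall>T\<in>C. \<exists>T'. neighbours \<epsilon> u T T'"
    by blast
  then show ?thesis
  proof cases
    case isolated
    have "T' = T" if "T' \<in> C" for T'
      using conn isolated that by (metis converse_rtranclpE)
    then have "R \<subseteq> T" using C(1) by blast
    then show ?thesis using Teps_bounded isolated(1) C(2) bounded_subset by blast
  next
    case linked
    have "T \<subseteq> cball 0 (M + 2 * \<epsilon>)" if T: "T \<in> C" for T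
    proof -
      obtain T' where "neighbours \<epsilon> u T T'" using linked T by blast
      then have "T \<inter> T' \<inter> \<Omega> \<noteq> {}"
        using Neps_meets_domain[OF u] unfolding neighbours_def by blast
      then obtain p where p: "p \<in> T" "p \<in> \<Omega>" by blast
      have "T \<subseteq> cball p (2 * \<epsilon>)" using Teps_subset_cball T C(2) p(1) by blast
      moreover have "cball p (2 * \<epsilon>) \<subseteq> cball 0 (M + 2 * \<epsilon>)"
        using M p(2) by (simp add: cball_subset_cball_iff dist_norm)
      ultimately show ?thesis by blast
    qed
    then show ?thesis using C(1) bounded_cball bounded_subset by (metis Union_least)
  qed
qed

lemma finite_vals_Regions:
  assumes "\<epsilon> > 0" "u \<in> SF \<epsilon> \<Omega>" "bounded \<Omega>" "R \<in> Regions \<epsilon> u"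
  shows "finite (vals \<epsilon> u R)"
proof -
  have "bounded R" using assms(2-4) conn_unions_bounded unfolding Regions_def by blast
  then have "finite (Leps_in \<epsilon> R)"
    unfolding Leps_in_def using assms(1) by (intro finite_Leps_Int_bounded)
  then show ?thesis unfolding vals_def by simp
qed

lemma cone_R_eq_convex_cone_hull: "cone_R \<epsilon> u R = convex_cone hull vals \<epsilon> u R"
  unfolding cone_R_def convex_cone_hull_eq_nonneg_combinations ..

lemma admissible_surface_subspaceE:
  assumes "admissible_surface \<epsilon> u R S" "subspace (cone_R \<epsilon> u R)"
  obtains h where "norm h = 1" "\<forall>c\<in>cone_R \<epsilon> u R. h \<bullet> c = 0"
    and "S = {v /\<^sub>R norm v | v. \<exists>F l \<tau>. F \<subseteq> vals \<epsilon> u R \<and> finite F \<and> (\<forall>w\<in>F. l w \<ge> 0)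
              \<and> \<tau> \<ge> 0 \<and> (\<Sum>w\<in>F. l w) + \<tau> > 0 \<and> v = (\<Sum>w\<in>F. l w *\<^sub>R w) + \<tau> *\<^sub>R h \<and> v \<noteq> 0}"
  using assms unfolding admissible_surface_def
  by (elim conjE) (drule mp, assumption, elim exE conjE, rule that)

lemma admissible_surface_subspace:
  assumes "admissible_surface \<epsilon> u R S" "subspace (cone_R \<epsilon> u R)"
  shows "\<exists>uR\<in>sphere 0 1. uR \<in> S \<and> (\<forall>z\<in>S. inner uR z \<ge> 0)"
proof -
  obtain h where h: "norm h = 1" "\<forall>c\<in>cone_R \<epsilon> u R. h \<bullet> c = 0"
    and S: "S = {v /\<^sub>R norm v | v. \<exists>F l \<tau>. F \<subseteq> vals \<epsilon> u R \<and> finite F \<and> (\<forall>w\<in>F. l w \<ge> 0)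
              \<and> \<tau> \<ge> 0 \<and> (\<Sum>w\<in>F. l w) + \<tau> > 0 \<and> v = (\<Sum>w\<in>F. l w *\<^sub>R w) + \<tau> *\<^sub>R h \<and> v \<noteq> 0}"
    using assms by (rule admissible_surface_subspaceE)
  have "h \<in> S"
    unfolding S using h(1)
    by (intro CollectI exI[of _ h] conjI exI[of _ "{}"] exI[of _ "\<lambda>_. 0"] exI[of _ "1::real"]) auto
  moreover have "h \<bullet> z \<ge> 0" if "z \<in> S" for z
  proof -
    obtain v F l \<tau> where z: "z = v /\<^sub>R norm v"
      and F: "F \<subseteq> vals \<epsilon> u R" "finite F" "\<forall>w\<in>F. l w \<ge> 0"
      and v: "\<tau> \<ge> 0" "v = (\<Sum>w\<in>F. l w *\<^sub>R w) + \<tau> *\<^sub>R h"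
      using \<open>z \<in> S\<close> unfolding S by (elim CollectE exE conjE) simp
    have "(\<Sum>w\<in>F. l w *\<^sub>R w) \<in> cone_R \<epsilon> u R" unfolding cone_R_def using F by blast
    then have "h \<bullet> v = \<tau>" using h by (simp add: v inner_add_right dot_square_norm)
    then show ?thesis using v(1) by (simp add: z)
  qed
  ultimately show ?thesis using h(1) by auto
qed

lemma admissible_surface_not_subspaceD:
  assumes "admissible_surface \<epsilon> u R S" "\<not> subspace (cone_R \<epsilon> u R)"
  shows "S = {v /\<^sub>R norm v | v. \<exists>F l. F \<subseteq> vals \<epsilon> u R \<and> finite F \<and> (\<forall>w\<in>F. l w \<ge> 0)
              \<and> (\<Sum>w\<in>F. l w) > 0 \<and> v = (\<Sum>w\<in>F. l w *\<^sub>R w) \<and> v \<noteq> 0}"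
  using assms unfolding admissible_surface_def by (elim conjE) (erule mp)

lemma admissible_surface_not_subspace:
  assumes "admissible_surface \<epsilon> u R S" "\<not> subspace (cone_R \<epsilon> u R)" "finite (vals \<epsilon> u R)"
  shows "\<exists>uR\<in>sphere 0 1. uR \<in> S \<and> (\<forall>z\<in>S. inner uR z \<ge> 0)"
proof -
  note S = admissible_surface_not_subspaceD[OF assms(1,2)]
  obtain q where q: "q \<in> cone_R \<epsilon> u R" "q \<noteq> 0" "\<forall>y\<in>cone_R \<epsilon> u R. 0 \<le> q \<bullet> y"
    using closed_convex_cone_meets_dual_cone[OF convex_cone_convex_cone_hull closed_convex_cone_hull]
      assms(2,3) unfolding cone_R_eq_convex_cone_hull by blast
  then obtain F l where F: "F \<subseteq> vals \<epsilon> u R" "finite F" "\<forall>w\<in>F. l w \<ge> 0"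
    and qF: "q = (\<Sum>w\<in>F. l w *\<^sub>R w)"
    unfolding cone_R_def by blast
  have "(\<Sum>w\<in>F. l w) > 0"
  proof (rule ccontr)
    assume "\<not> (\<Sum>w\<in>F. l w) > 0"
    then have "(\<Sum>w\<in>F. l w) = 0" using sum_nonneg[of F l] F(3) by fastforce
    then have "\<forall>w\<in>F. l w = 0" using sum_nonneg_eq_0_iff[OF F(2)] F(3) by blast
    then have "q = 0" unfolding qF by simp
    with q(2) show False ..
  qed
  then have "q /\<^sub>R norm q \<in> S"
    unfolding S using F qF q(2) by (intro CollectI exI[of _ q] conjI refl exI[of _ F] exI[of _ l])
  moreover have "(q /\<^sub>R norm q) \<bullet> z \<ge> 0" if "z \<in> S" for z
  proof -
    obtain v F' l' where z: "z = v /\<^sub>R norm v"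
      and F': "F' \<subseteq> vals \<epsilon> u R" "finite F'" "\<forall>w\<in>F'. l' w \<ge> 0" and v: "v = (\<Sum>w\<in>F'. l' w *\<^sub>R w)"
      using \<open>z \<in> S\<close> unfolding S by (elim CollectE exE conjE) simp
    have "v \<in> cone_R \<epsilon> u R" unfolding cone_R_def v using F' by blast
    then have "q \<bullet> v \<ge> 0" using q(3) by blast
    then show ?thesis by (simp add: z)
  qed
  ultimately show ?thesis using q(2) by auto
qed

theorem lemmaB1:
  fixes \<epsilon> :: real and \<Omega> :: "(real^2) set" and u :: "real^2 \<Rightarrow> real^3"
    and R :: "(real^2) set" and S :: "(real^3) set"
  assumes "\<epsilon> > 0" and "bounded \<Omega>" and "open \<Omega>"
    and "u \<in> SF \<epsilon> \<Omega>" and "R \<in> Regions \<epsilon> u"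
    and "S \<subseteq> sphere 0 1" and "admissible_surface \<epsilon> u R S"
  shows "\<exists>uR \<in> sphere 0 1. uR \<in> S \<and> (\<forall>z\<in>S. inner uR z \<ge> 0)"
proof (cases "subspace (cone_R \<epsilon> u R)")
  case True
  with assms(7) show ?thesis by (rule admissible_surface_subspace)
next
  case False
  have "finite (vals \<epsilon> u R)" using assms(1,4,2,5) by (rule finite_vals_Regions)
  with assms(7) False show ?thesis by (rule admissible_surface_not_subspace)
qed

end
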